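(* Let $k\ge1$, $n\ge 2k+1$ and let $\{x,y\}$ be a connector. Then $(x,f(x),y,f(y))$ is a $4$-cycle in the Kneser graph $K(n,k)$.
   Context: Vertices of $K(n,k)$ are identified with $X_{n,k}$, the binary strings of length $n$ with $k$ ones (characteristic vectors); two strings are adjacent iff they have no $1$ at a common position. Positions are cyclic mod $n$; $\sigma^i(z)$ denotes the cyclic right shift of $z$ by $i$ positions. Cyclic parenthesis matching: $1$s opening, $0$s closing brackets; each $1$ at position $i$ is matched to the last $0$ of the shortest cyclic substring starting at $i$ going right with equally many $0$s and $1$s (all $1$s get matched, $n-2k$ zeros are unmatched). $f(x)$ is $x$ with all matched bits complemented. A matched pair (a $1$ and the $0$ matched to it) is visible if it is not enclosed by another matched pair, i.e. there is no other matched pair whose cyclic interval from its $1$ to its $0$ contains both positions of the given pair. $D$ denotes the set of Dyck words (equally many $0$s and $1$s, at least as many $1$s as $0$s in every prefix, including the empty word). A connector is an unordered pair $\{x,y\}$ of strings in $X_{n,k}$ such that for some $i\ge0$, some $u,w\in D$ and some binary strings $p,q,r$, $x=\sigma^i(p\,1\,u\,0\,q\,0\,w\,0\,r)$ and $y=\sigma^i(p\,0\,u\,0\,q\,1\,w\,0\,r)$, where in $x$ the displayed $1$ and $0$ around $u$ are matched to each other and form a visible pair, and the two displayed $0$s around $w$ are unmatched in $x$. *)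

theory Defs
  imports Main
begin

text \<open>Binary strings are lists of booleans; True is a 1, False is a 0.
  Positions are 0 .. n-1 and are taken cyclically mod n.\<close>

definition Xnk :: "nat \<Rightarrow> nat \<Rightarrow> bool list set" where
  "Xnk n k = {z. length z = n \<and> count_list z True = k}"

definition kneser_adj :: "nat \<Rightarrow> nat \<Rightarrow> bool list \<Rightarrow> bool list \<Rightarrow> bool" where
  "kneser_adj n k x y \<longleftrightarrow> x \<in> Xnk n k \<and> y \<in> Xnk n k \<and> (\<forall>j<n. \<not> (x ! j \<and> y ! j))"

text \<open>Cyclic right shift by i positions: (sigma i z) ! ((j + i) mod n) = z ! j.\<close>
definition sigma :: "nat \<Rightarrow> bool list \<Rightarrow> bool list" where
  "sigma i z = rotate (length z - i mod length z) z"

definition ones_sub :: "bool list \<Rightarrow> nat \<Rightarrow> nat \<Rightarrow> nat" where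
  "ones_sub x i m = card {t. t < m \<and> x ! ((i + t) mod length x)}"

definition balanced_sub :: "bool list \<Rightarrow> nat \<Rightarrow> nat \<Rightarrow> bool" where
  "balanced_sub x i m \<longleftrightarrow> 2 * ones_sub x i m = m"

text \<open>Position of the 0 matched to the 1 at position i: last position of the
  shortest (nonempty) balanced cyclic substring starting at i.\<close>
definition match :: "bool list \<Rightarrow> nat \<Rightarrow> nat" where
  "match x i = (i + (LEAST m. 0 < m \<and> balanced_sub x i m) - 1) mod length x"

definition matched :: "bool list \<Rightarrow> nat \<Rightarrow> bool" where
  "matched x j \<longleftrightarrow> x ! j \<or> (\<exists>i < length x. x ! i \<and> match x i = j)"

definition f :: "bool list \<Rightarrow> bool list" where
  "f x = map (\<lambda>j. if matched x j then \<not> x ! j else x ! j) [0..<length x]"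

definition cyc_interval :: "nat \<Rightarrow> nat \<Rightarrow> nat \<Rightarrow> nat set" where
  "cyc_interval n a b = {(a + t) mod n | t. t \<le> (b + n - a) mod n}"

definition visible :: "bool list \<Rightarrow> nat \<Rightarrow> bool" where
  "visible x i \<longleftrightarrow> x ! i \<and>
     \<not> (\<exists>i' < length x. i' \<noteq> i \<and> x ! i' \<and>
          i \<in> cyc_interval (length x) i' (match x i') \<and>
          match x i \<in> cyc_interval (length x) i' (match x i'))"

definition dyck :: "bool list \<Rightarrow> bool" where
  "dyck u \<longleftrightarrow> count_list u True = count_list u False \<and>
     (\<forall>m \<le> length u. count_list (take m u) False \<le> count_list (take m u) True)"

definition connector_ord :: "nat \<Rightarrow> nat \<Rightarrow> bool list \<Rightarrow> bool list \<Rightarrow> bool" where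
  "connector_ord n k x y \<longleftrightarrow> x \<in> Xnk n k \<and> y \<in> Xnk n k \<and>
     (\<exists>i u w p q r. dyck u \<and> dyck w \<and>
        x = sigma i (p @ [True] @ u @ [False] @ q @ [False] @ w @ [False] @ r) \<and>
        y = sigma i (p @ [False] @ u @ [False] @ q @ [True] @ w @ [False] @ r) \<and>
        (let a = (length p + i) mod n;
             b = (length p + 1 + length u + i) mod n;
             c = (length p + 2 + length u + length q + i) mod n;
             d = (length p + 3 + length u + length q + length w + i) mod n
         in match x a = b \<and> visible x a \<and> \<not> matched x c \<and> \<not> matched x d))"

definition connector :: "nat \<Rightarrow> nat \<Rightarrow> bool list \<Rightarrow> bool list \<Rightarrow> bool" where
  "connector n k x y \<longleftrightarrow> connector_ord n k x y \<or> connector_ord n k y x"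

definition four_cycle :: "nat \<Rightarrow> nat \<Rightarrow> bool list \<Rightarrow> bool list \<Rightarrow> bool list \<Rightarrow> bool list \<Rightarrow> bool" where
  "four_cycle n k a b c d \<longleftrightarrow> distinct [a, b, c, d] \<and>
     kneser_adj n k a b \<and> kneser_adj n k b c \<and> kneser_adj n k c d \<and> kneser_adj n k d a"

end

theory Submission
  imports Defs "HOL-Number_Theory.Cong"
begin

text \<open>Read a word cyclically as a lattice path, 1 an up-step and 0 a down-step. The 0 matched
  to a 1 closes the first return of the path started at that 1, so matching is injective and f x is
  a vertex of K(n,k) disjoint from x. In a connector, y arises from x by moving the visible 1 at a
  onto the unmatched 0 at c; hence f x, whose 1s are matched 0s of x, is disjoint from y. The
  remaining edge between f y and x amounts to a staying unmatched in y, a statement about the path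
  started right after c. The four vertices are told apart at a, at c, and at d, which is matched
  to c in y.\<close>

definition height :: "bool list \<Rightarrow> nat \<Rightarrow> nat \<Rightarrow> int" where
  "height x i m = 2 * int (ones_sub x i m) - int m"

lemma ones_sub_Suc:
  "ones_sub x i (Suc m) = ones_sub x i m + (if x ! ((i + m) mod length x) then 1 else 0)"
proof -
  have "{t. t < Suc m \<and> x ! ((i + t) mod length x)} =
        {t. t < m \<and> x ! ((i + t) mod length x)} \<union> (if x ! ((i + m) mod length x) then {m} else {})"
    by (auto simp: less_Suc_eq)
  then show ?thesis unfolding ones_sub_def by auto
qed

lemma height_0 [simp]: "height x i 0 = 0"
  by (simp add: height_def ones_sub_def)

lemma height_Suc:
  "height x i (Suc m) = height x i m + (if x ! ((i + m) mod length x) then 1 else -1)"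
  by (simp add: height_def ones_sub_Suc)

lemma abs_height_Suc_diff: "\<bar>height x i (Suc m) - height x i m\<bar> \<le> 1"
  by (simp add: height_Suc)

lemma height_add:
  "height x i (m1 + m2) = height x i m1 + height x ((i + m1) mod length x) m2"
proof (induction m2)
  case (Suc m2)
  have "((i + m1) mod length x + m2) mod length x = (i + (m1 + m2)) mod length x"
    by (simp add: mod_add_left_eq add.assoc)
  then show ?case using Suc by (simp add: height_Suc)
qed simp

lemma height_mod: "height x (i mod length x) m = height x i m"
  by (simp add: height_def ones_sub_def mod_add_left_eq)

lemma count_list_True_eq_card: "count_list xs True = card {j. j < length xs \<and> xs ! j}"
  by (simp add: count_list_eq_length_filter length_filter_conv_card)

lemma height_length:
  assumes "x \<noteq> []"
  shows "height x i (length x) = 2 * int (count_list x True) - int (length x)"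
proof -
  let ?n = "length x"
  have "{t. t < ?n \<and> x ! (t mod ?n)} = {j. j < ?n \<and> x ! j}" by auto
  then have "height x 0 ?n = 2 * int (count_list x True) - int ?n"
    by (simp add: height_def ones_sub_def count_list_True_eq_card)
  moreover have "height x (i mod ?n) ?n = height x 0 ?n"
    using height_add[of x 0 "i mod ?n" ?n] height_add[of x 0 ?n "i mod ?n"] assms
    by (simp add: add.commute)
  ultimately show ?thesis by (simp add: height_mod)
qed

lemma balanced_sub_iff_height: "balanced_sub x i m \<longleftrightarrow> height x i m = 0"
  unfolding balanced_sub_def height_def by linarith

lemma unit_step_first_zero:
  fixes h :: "nat \<Rightarrow> int"
  assumes step: "\<And>t. \<bar>h (Suc t) - h t\<bar> \<le> 1"
    and "h s > 0" and "h e \<le> 0" and "s \<le> e"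
  obtains m where "s < m" "m \<le> e" "h m = 0" "\<And>m'. s \<le> m' \<Longrightarrow> m' < m \<Longrightarrow> h m' > 0"
proof -
  define m where "m = (LEAST m. s < m \<and> h m \<le> 0)"
  have e: "s < e \<and> h e \<le> 0" using assms by (metis le_neq_implies_less not_le)
  then have m: "s < m \<and> h m \<le> 0" unfolding m_def by (rule LeastI)
  have "m \<le> e" unfolding m_def using e by (rule Least_le)
  have pos: "h m' > 0" if "s \<le> m'" "m' < m" for m'
    using that not_less_Least[of m' "\<lambda>m. s < m \<and> h m \<le> 0"] \<open>h s > 0\<close>
    unfolding m_def by (cases "m' = s") auto
  obtain m0 where m0: "m = Suc m0" using m by (cases m) auto
  have "h m0 > 0" using pos[of m0] m0 m by simp
  then have "h m = 0" using m step[of m0] unfolding m0 by linarith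
  then show ?thesis using that m \<open>m \<le> e\<close> pos by blast
qed

lemma unit_step_last_up_crossing:
  fixes h :: "nat \<Rightarrow> int"
  assumes step: "\<And>t. \<bar>h (Suc t) - h t\<bar> \<le> 1"
    and "h s \<le> v" and "h e > v" and "s \<le> e"
  shows "\<exists>t. s \<le> t \<and> t < e \<and> h t = v \<and> h (Suc t) = v + 1 \<and>
    (\<forall>t'. t < t' \<and> t' \<le> e \<longrightarrow> h t' > v)"
  using assms(3,4)
proof (induction e)
  case 0 then show ?case using assms(2) by simp
next
  case (Suc e)
  have "s \<le> e" using Suc.prems assms(2) by (metis le_SucE not_le)
  show ?case
  proof (cases "h e > v")
    case True
    with Suc.IH \<open>s \<le> e\<close> Suc.prems show ?thesis by (metis le_Suc_eq less_Suc_eq)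
  next
    case False
    then have "h e = v" "h (Suc e) = v + 1" using Suc.prems step[of e] by linarith+
    then show ?thesis using \<open>s \<le> e\<close> Suc.prems by (intro exI[of _ e]) (auto simp: le_Suc_eq)
  qed
qed

lemma match_eqI:
  assumes "0 < m" "height x i m = 0" "\<And>m'. 0 < m' \<Longrightarrow> m' < m \<Longrightarrow> height x i m' \<noteq> 0"
  shows "match x i = (i + m - 1) mod length x"
proof -
  have "(LEAST m. 0 < m \<and> balanced_sub x i m) = m"
  proof (rule Least_equality)
    show "0 < m \<and> balanced_sub x i m" using assms by (simp add: balanced_sub_iff_height)
  next
    fix m' assume "0 < m' \<and> balanced_sub x i m'"
    then show "m \<le> m'" using assms(3) by (metis balanced_sub_iff_height not_le)
  qed
  then show ?thesis unfolding match_def by simp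
qed

lemma match_first_return:
  assumes "2 * count_list x True < length x" "i < length x" "x ! i"
  obtains m where "0 < m" "m \<le> length x" "height x i m = 0"
    "\<And>m'. 0 < m' \<Longrightarrow> m' < m \<Longrightarrow> height x i m' > 0" "match x i = (i + m - 1) mod length x"
proof -
  have "x \<noteq> []" using assms(2) by auto
  have "height x i 1 > 0" using height_Suc[of x i 0] assms(2,3) by simp
  moreover have "height x i (length x) \<le> 0" using height_length[OF \<open>x \<noteq> []\<close>, of i] assms(1) by simp
  moreover have "1 \<le> length x" using assms(2) by simp
  ultimately obtain m where m: "1 < m" "m \<le> length x" "height x i m = 0"
    "\<And>m'. 1 \<le> m' \<Longrightarrow> m' < m \<Longrightarrow> height x i m' > 0"
    using unit_step_first_zero[of "height x i", OF abs_height_Suc_diff] by metis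
  have pos: "height x i m' > 0" if "0 < m'" "m' < m" for m'
    using m(4) that by simp
  have "0 < m" using m(1) by simp
  have "height x i m' \<noteq> 0" if "0 < m'" "m' < m" for m'
    using pos[OF that] by simp
  then have "match x i = (i + m - 1) mod length x"
    by (rule match_eqI[OF \<open>0 < m\<close> m(3)])
  from that[OF \<open>0 < m\<close> m(2,3) pos this] show ?thesis .
qed

lemma match_less: "x \<noteq> [] \<Longrightarrow> match x i < length x"
  by (simp add: match_def)

lemma not_nth_match:
  assumes "2 * count_list x True < length x" "i < length x" "x ! i"
  shows "\<not> x ! match x i"
proof -
  obtain m where m: "0 < m" "height x i m = 0" "\<And>m'. 0 < m' \<Longrightarrow> m' < m \<Longrightarrow> height x i m' > 0"
    "match x i = (i + m - 1) mod length x"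
    using match_first_return[OF assms] by blast
  have "m \<noteq> 1" using m(2) height_Suc[of x i 0] assms(2,3) by auto
  then obtain m1 where m1: "m = Suc m1" "0 < m1" using m(1) by (cases m) auto
  then have "height x i m1 > 0" using m(3) by simp
  then have "\<not> x ! ((i + m1) mod length x)" using height_Suc[of x i m1] m(2) m1(1)
    by (auto split: if_splits)
  then show ?thesis using m(4) m1 by simp
qed

lemma mod_add_right_cancel_nat: "(a + c) mod n = (b + c) mod n \<Longrightarrow> a mod n = (b :: nat) mod n"
  using cong_add_rcancel_nat[of a c b n] unfolding cong_def by simp

lemma offset_mod_inj:
  "s1 < n \<Longrightarrow> s2 < n \<Longrightarrow> (j + s1) mod n = (j + s2) mod n \<longleftrightarrow> s1 = (s2 :: nat)"
  using mod_add_right_cancel_nat[of s1 j n s2] by (metis add.commute mod_less)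

lemma offset_mod_surj:
  assumes "t < (n :: nat)"
  obtains s where "s < n" "(j + s) mod n = t"
proof -
  define s where "s = (t + (n - j mod n)) mod n"
  have "(j + s) mod n = (j mod n + (t + (n - j mod n))) mod n"
    unfolding s_def by (simp add: mod_add_right_eq mod_add_left_eq)
  also have "j mod n + (t + (n - j mod n)) = t + n"
    using assms mod_less_divisor[of n j] by linarith
  finally have "(j + s) mod n = t" using assms by simp
  moreover have "s < n" unfolding s_def using assms by simp
  ultimately show ?thesis using that by blast
qed

text \<open>If the shorter walk started later, the longer one would pass through its start at height 0.\<close>
lemma first_returns_same_end:
  assumes "i < length x" "j < length x" "0 < mi" "mi \<le> mj"
    and "height x i mi = 0" "height x j mj = 0" "\<And>m. 0 < m \<Longrightarrow> m < mj \<Longrightarrow> height x j m > 0"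
    and "(i + mi - 1) mod length x = (j + mj - 1) mod length x"
  shows "i = j"
proof -
  let ?n = "length x"
  define e where "e = mj - mi"
  have "(i + (mi - 1)) mod ?n = ((j + e) + (mi - 1)) mod ?n"
    using assms(3,4,8) unfolding e_def by (simp add: algebra_simps)
  from mod_add_right_cancel_nat[OF this] have je: "(j + e) mod ?n = i" using assms(1) by simp
  show "i = j"
  proof (rule ccontr)
    assume "i \<noteq> j"
    with je assms(2) have "e \<noteq> 0" by (metis add_0_right mod_less)
    then have "height x j e > 0" using assms(3,7) unfolding e_def by simp
    moreover have "height x j mj = height x j e + height x i mi"
      using height_add[of x j e mi] je assms(4) unfolding e_def by simp
    ultimately show False using assms(5,6) by simp
  qed
qed

lemma inj_on_match:
  assumes "2 * count_list x True < length x"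
  shows "inj_on (match x) {i. i < length x \<and> x ! i}"
proof (rule inj_onI)
  fix i j assume i: "i \<in> {i. i < length x \<and> x ! i}" and j: "j \<in> {i. i < length x \<and> x ! i}"
    and eq: "match x i = match x j"
  obtain mi where mi: "0 < mi" "height x i mi = 0" "\<And>m. 0 < m \<Longrightarrow> m < mi \<Longrightarrow> height x i m > 0"
    "match x i = (i + mi - 1) mod length x"
    using match_first_return[OF assms] i by blast
  obtain mj where mj: "0 < mj" "height x j mj = 0" "\<And>m. 0 < m \<Longrightarrow> m < mj \<Longrightarrow> height x j m > 0"
    "match x j = (j + mj - 1) mod length x"
    using match_first_return[OF assms] j by blast
  show "i = j"
  proof (cases "mi \<le> mj")
    case True
    then show ?thesis using first_returns_same_end[of i x j mi mj] i j mi mj eq by auto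
  next
    case False
    then show ?thesis using first_returns_same_end[of j x i mj mi] i j mi mj eq by auto
  qed
qed

lemma length_f [simp]: "length (f x) = length x"
  by (simp add: f_def)

lemma nth_f: "j < length x \<Longrightarrow> f x ! j \<longleftrightarrow> \<not> x ! j \<and> matched x j"
  by (auto simp: f_def matched_def)

lemma count_list_f:
  assumes "2 * count_list x True < length x"
  shows "count_list (f x) True = count_list x True"
proof -
  have "x \<noteq> []" using assms by auto
  have "{j. j < length (f x) \<and> f x ! j} = match x ` {i. i < length x \<and> x ! i}"
    using nth_f match_less[OF \<open>x \<noteq> []\<close>] not_nth_match[OF assms] by (auto simp: matched_def)
  then show ?thesis
    using card_image[OF inj_on_match[OF assms]] by (simp add: count_list_True_eq_card)
qed

lemma f_in_Xnk: "x \<in> Xnk n k \<Longrightarrow> 2 * k < n \<Longrightarrow> f x \<in> Xnk n k"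
  using count_list_f by (simp add: Xnk_def)

lemma kneser_adj_f: "x \<in> Xnk n k \<Longrightarrow> 2 * k < n \<Longrightarrow> kneser_adj n k x (f x)"
  using f_in_Xnk nth_f by (auto simp: kneser_adj_def Xnk_def)

lemma length_sigma [simp]: "length (sigma i z) = length z"
  by (simp add: sigma_def)

lemma sigma_nth:
  assumes "z \<noteq> []"
  shows "sigma i z ! ((j + i) mod length z) = z ! (j mod length z)"
proof -
  let ?n = "length z"
  have "0 < ?n" using assms by simp
  have "sigma i z ! ((j + i) mod ?n) = z ! ((?n - i mod ?n + (j + i) mod ?n) mod ?n)"
    unfolding sigma_def using \<open>0 < ?n\<close> by (simp add: nth_rotate)
  also have "(?n - i mod ?n + (j + i) mod ?n) mod ?n = (?n - i mod ?n + (j + i)) mod ?n"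
    by (simp add: mod_add_right_eq)
  also have "?n - i mod ?n + (j + i) = j + ?n * (1 + i div ?n)"
    using mod_mult_div_eq[of i ?n] mod_less_divisor[OF \<open>0 < ?n\<close>, of i]
    by (simp add: algebra_simps; linarith)
  also have "(j + ?n * (1 + i div ?n)) mod ?n = j mod ?n" by (rule mod_mult_self2)
  finally show ?thesis .
qed

lemma height_sigma:
  assumes "z \<noteq> []"
  shows "height (sigma i z) (j + i) m = height z j m"
proof -
  have "sigma i z ! ((j + i + t) mod length z) = z ! ((j + t) mod length z)" for t
    using sigma_nth[OF assms, of i "j + t"] by (simp add: add.commute add.left_commute)
  then show ?thesis by (simp add: height_def ones_sub_def)
qed

lemma sigma_list_update:
  assumes "j < length z"
  shows "sigma i (z[j := v]) = (sigma i z)[(j + i) mod length z := v]"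
proof (rule nth_equalityI)
  let ?n = "length z"
  have "z \<noteq> []" using assms by auto
  fix t assume "t < length (sigma i (z[j := v]))"
  then have "t < ?n" by simp
  then obtain s where s: "s < ?n" "(i + s) mod ?n = t" by (rule offset_mod_surj)
  have "z[j := v] \<noteq> []" using \<open>z \<noteq> []\<close> by simp
  from sigma_nth[OF this, of i s] sigma_nth[OF \<open>z \<noteq> []\<close>, of i s]
  show "sigma i (z[j := v]) ! t = (sigma i z)[(j + i) mod ?n := v] ! t"
    using s assms offset_mod_inj[of s ?n j i] mod_less_divisor[of ?n "i + j"] \<open>z \<noteq> []\<close>
    by (auto simp: nth_list_update add.commute)
qed simp

lemma ones_sub_eq_count_list_take:
  "j + m \<le> length z \<Longrightarrow> ones_sub z j m = count_list (take m (drop j z)) True"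
proof (induction m)
  case (Suc m)
  then have "take (Suc m) (drop j z) = take m (drop j z) @ [z ! (j + m)]"
    by (simp add: take_Suc_conv_app_nth)
  with Suc show ?case by (simp add: ones_sub_Suc)
qed (simp add: ones_sub_def)

lemma count_list_True_add_False: "count_list xs True + count_list xs False = length xs"
  by (induction xs) auto

lemma height_eq_count_list_take:
  "j + m \<le> length z \<Longrightarrow>
    height z j m =
      int (count_list (take m (drop j z)) True) - int (count_list (take m (drop j z)) False)"
  using count_list_True_add_False[of "take m (drop j z)"]
  by (simp add: height_def ones_sub_eq_count_list_take)

lemma height_dyck_block:
  assumes "dyck w"
  shows "\<And>m. 0 < m \<Longrightarrow> m < length w + 2 \<Longrightarrow> height (pre @ True # w @ False # post) (length pre) m > 0"
    and "height (pre @ True # w @ False # post) (length pre) (length w + 2) = 0"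
  using assms by (auto simp: height_eq_count_list_take dyck_def gr0_conv_Suc less_Suc_eq_le)

lemma height_dyck_then_down:
  "dyck w \<Longrightarrow> height (pre @ w @ False # post) (length pre) (length w + 1) = -1"
  by (simp add: height_eq_count_list_take dyck_def)

lemma mem_cyc_interval:
  assumes "t \<le> s" "s \<le> e" "e < (n :: nat)"
  shows "(j + s) mod n \<in> cyc_interval n ((j + t) mod n) ((j + e) mod n)"
proof -
  let ?a = "(j + t) mod n"
  have shift: "(j + r) mod n = (?a + (r - t)) mod n" if "t \<le> r" for r
  proof -
    have "(?a + (r - t)) mod n = (j + t + (r - t)) mod n" by (rule mod_add_left_eq)
    then show ?thesis using that by simp
  qed
  have "?a < n" "e - t < n" using assms by auto
  have "((?a + (e - t)) mod n + n - ?a) mod n = e - t"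
  proof (cases "?a + (e - t) < n")
    case False
    moreover have "?a + (e - t) - n < n" using \<open>?a < n\<close> \<open>e - t < n\<close> by linarith
    ultimately have "(?a + (e - t)) mod n = ?a + (e - t) - n" by (simp add: le_mod_geq)
    then show ?thesis using False \<open>e - t < n\<close> by simp
  qed (use \<open>e - t < n\<close> in simp)
  then show ?thesis
    unfolding cyc_interval_def shift[OF assms(1)] shift[OF order.trans[OF assms(1,2)]]
    using assms(2) by (intro CollectI exI[of _ "s - t"]) auto
qed

lemma match_of_height_return:
  assumes "t < e" "height x j e = height x j t"
    and "\<And>m. t < m \<Longrightarrow> m < e \<Longrightarrow> height x j m \<noteq> height x j t"
  shows "match x ((j + t) mod length x) = (j + (e - 1)) mod length x"
proof -
  let ?T = "(j + t) mod length x"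
  have shift: "height x ?T m = height x j (t + m) - height x j t" for m
    using height_add[of x j t m] by simp
  have "height x ?T m \<noteq> 0" if "0 < m" "m < e - t" for m
    using assms(3)[of "t + m"] that shift by simp
  then have "match x ?T = (?T + (e - t) - 1) mod length x"
    using assms(1,2) shift by (intro match_eqI) auto
  also have "?T + (e - t) - 1 = ?T + (e - t - 1)" using assms(1) by simp
  also have "(?T + (e - t - 1)) mod length x = (j + t + (e - t - 1)) mod length x"
    by (rule mod_add_left_eq)
  also have "j + t + (e - t - 1) = j + (e - 1)" using assms(1) by simp
  finally show ?thesis .
qed

lemma nth_of_height_up: "height x j (Suc t) = height x j t + 1 \<Longrightarrow> x ! ((j + t) mod length x)"
  by (auto simp: height_Suc split: if_splits)

lemma match_of_up_step:
  assumes "height x j (Suc t) = height x j t + 1" "Suc t \<le> N" "height x j N < height x j t"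
  obtains e where "Suc t < e" "e \<le> N" "height x j e = height x j t"
    "match x ((j + t) mod length x) = (j + (e - 1)) mod length x"
proof -
  let ?h = "\<lambda>m. height x j m - height x j t"
  have "\<bar>?h (Suc m) - ?h m\<bar> \<le> 1" for m using abs_height_Suc_diff by simp
  moreover have "?h (Suc t) > 0" "?h N \<le> 0" using assms(1,3) by simp_all
  ultimately obtain e where e: "Suc t < e" "e \<le> N" "?h e = 0" "\<And>m. Suc t \<le> m \<Longrightarrow> m < e \<Longrightarrow> ?h m > 0"
    using unit_step_first_zero[of ?h "Suc t" N] assms(2) by metis
  have "height x j m \<noteq> height x j t" if "t < m" "m < e" for m
    using e(4)[of m] that by simp
  moreover have "height x j e = height x j t" using e(3) by simp
  ultimately have "match x ((j + t) mod length x) = (j + (e - 1)) mod length x"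
    using e(1) by (intro match_of_height_return) simp_all
  from that[OF e(1,2) \<open>height x j e = height x j t\<close> this] show ?thesis .
qed

text \<open>A last visit of the final height before the end would be a 1 matched to the 0 at c.\<close>
lemma height_length_less_after_unmatched:
  assumes "c < length x" "\<not> matched x c" "s < length x"
  shows "height x (Suc c) (length x) < height x (Suc c) s"
proof (rule ccontr)
  let ?n = "length x" and ?H = "height x (Suc c)"
  assume below: "\<not> ?H ?n < ?H s"
  have "Suc c + (?n - 1) = c + ?n" using assms(1) by simp
  then have c: "(Suc c + (?n - 1)) mod ?n = c" using assms(1) by simp
  have "\<not> x ! c" using assms(2) by (simp add: matched_def)
  moreover have "Suc (?n - 1) = ?n" using assms(1) by simp
  ultimately have "?H ?n = ?H (?n - 1) - 1" using height_Suc[of x "Suc c" "?n - 1"] c by simp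
  then obtain t where t: "s \<le> t" "t < ?n - 1" "?H t = ?H ?n" "?H (Suc t) = ?H ?n + 1"
    "\<And>t'. t < t' \<Longrightarrow> t' \<le> ?n - 1 \<Longrightarrow> ?H t' > ?H ?n"
    using unit_step_last_up_crossing[of ?H s "?H ?n" "?n - 1", OF abs_height_Suc_diff]
      below assms(3) by fastforce
  have "match x ((Suc c + t) mod ?n) = c"
    using match_of_height_return[of t ?n x "Suc c"] t c by fastforce
  moreover have "x ! ((Suc c + t) mod ?n)" using t(3,4) by (intro nth_of_height_up) simp
  moreover have "(Suc c + t) mod ?n < ?n" using assms(1) by (intro mod_less_divisor) auto
  ultimately have "matched x c" unfolding matched_def by blast
  with assms(2) show False ..
qed

lemma not_visible_if_enclosed:
  assumes "t < a'" "0 < m" "a' + m \<le> e" "e \<le> length x"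
    and "x ! ((j + t) mod length x)"
    and "match x ((j + t) mod length x) = (j + (e - 1)) mod length x"
    and "match x ((j + a') mod length x) = (j + (a' + m - 1)) mod length x"
  shows "\<not> visible x ((j + a') mod length x)"
proof -
  let ?n = "length x" and ?T = "(j + t) mod length x"
  have "?T \<noteq> (j + a') mod ?n" using assms(1-4) offset_mod_inj[of t ?n a' j] by simp
  moreover have "?T < ?n" using assms(4,1,3) by (intro mod_less_divisor) auto
  moreover have "(j + a') mod ?n \<in> cyc_interval ?n ?T (match x ?T)"
    unfolding assms(6) using assms(1-4) by (intro mem_cyc_interval) auto
  moreover have "match x ((j + a') mod ?n) \<in> cyc_interval ?n ?T (match x ?T)"
    unfolding assms(6,7) using assms(1-4) by (intro mem_cyc_interval) auto
  ultimately show ?thesis using assms(5) unfolding visible_def by blast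
qed

text \<open>Otherwise the last up-step from one below the height at a starts a pair enclosing the
  visible pair at a.\<close>
lemma height_le_at_visible:
  assumes "a' < length x" "\<And>s. s < length x \<Longrightarrow> height x j (length x) < height x j s"
    and "visible x ((j + a') mod length x)" "s \<le> a'"
  shows "height x j a' \<le> height x j s"
proof (rule ccontr)
  let ?n = "length x" and ?H = "height x j" and ?a = "(j + a') mod length x"
  assume "\<not> ?H a' \<le> ?H s"
  define v where "v = ?H a' - 1"
  obtain t where t: "s \<le> t" "t < a'" "?H t = v" "?H (Suc t) = v + 1"
    "\<And>t'. t < t' \<Longrightarrow> t' \<le> a' \<Longrightarrow> ?H t' > v"
    using unit_step_last_up_crossing[of ?H s v a', OF abs_height_Suc_diff]
      \<open>\<not> ?H a' \<le> ?H s\<close> assms(4) unfolding v_def by fastforce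
  have "?H ?n < ?H t" using assms(1) assms(2)[of t] t(2) by simp
  moreover have "?H (Suc t) = ?H t + 1" "Suc t \<le> ?n" using t(2,3,4) assms(1) by simp_all
  ultimately obtain e where e: "Suc t < e" "e \<le> ?n" "?H e = v"
    and mt: "match x ((j + t) mod ?n) = (j + (e - 1)) mod ?n"
    using match_of_up_step[of x j t ?n] t(3) by metis
  have xt: "x ! ((j + t) mod ?n)" using t(3,4) by (intro nth_of_height_up) simp
  have "x ! ?a" using assms(3) by (simp add: visible_def)
  moreover have "?a < ?n" using assms(1) by (intro mod_less_divisor) auto
  moreover have "x \<noteq> []" using assms(1) by auto
  then have "2 * count_list x True < ?n"
    using assms(2)[of 0] height_length[of x j] by simp
  ultimately obtain m where m: "0 < m" "height x ?a m = 0"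
    "\<And>m'. 0 < m' \<Longrightarrow> m' < m \<Longrightarrow> height x ?a m' > 0" "match x ?a = (?a + m - 1) mod ?n"
    using match_first_return by metis
  have fits: "a' + m \<le> e"
  proof (rule ccontr)
    assume "\<not> a' + m \<le> e"
    have "?H e > v"
    proof (cases "e \<le> a'")
      case False
      then have "?H e = ?H a' + height x ?a (e - a')" using height_add[of x j a' "e - a'"] by simp
      moreover have "height x ?a (e - a') > 0" using m(3) False \<open>\<not> a' + m \<le> e\<close> by simp
      ultimately show ?thesis unfolding v_def by simp
    qed (use t(5) e(1) in simp)
    then show False using e(3) by simp
  qed
  have "match x ?a = (?a + (m - 1)) mod ?n" using m(1,4) by simp
  also have "\<dots> = (j + a' + (m - 1)) mod ?n" by (rule mod_add_left_eq)
  also have "j + a' + (m - 1) = j + (a' + m - 1)" using m(1) by simp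
  finally have "\<not> visible x ?a" by (rule not_visible_if_enclosed[OF t(2) m(1) fits e(2) xt mt])
  then show False using assms(3) by contradiction
qed

lemma Suc_add_pred_mod: "c < n \<Longrightarrow> (Suc c + (n - 1)) mod n = (c :: nat)"
  by (simp add: Suc_diff_Suc)

lemma height_move_one:
  assumes "c < length x" "a' < length x - 1" "x ! ((Suc c + a') mod length x)" "\<not> x ! c"
    and "t \<le> length x"
  shows "height (x[(Suc c + a') mod length x := False, c := True]) (Suc c) t =
    height x (Suc c) t - (if a' < t \<and> t < length x then 2 else 0)"
  using assms(5)
proof (induction t)
  case (Suc t)
  let ?n = "length x" and ?a = "(Suc c + a') mod length x" and ?P = "(Suc c + t) mod length x"
  let ?y = "x[?a := False, c := True]"
  have "t < ?n" using Suc.prems by simp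
  have "?P < ?n" using \<open>t < ?n\<close> by (intro mod_less_divisor) auto
  then have "?y ! ?P = (if ?P = c then True else if ?P = ?a then False else x ! ?P)"
    using assms(1) by (simp add: nth_list_update)
  moreover have "a' < ?n" using assms(2) by simp
  then have "?P = ?a \<longleftrightarrow> t = a'" using offset_mod_inj[of t ?n a' "Suc c"] \<open>t < ?n\<close> by simp
  moreover have "?P = c \<longleftrightarrow> t = ?n - 1"
    using offset_mod_inj[of t ?n "?n - 1" "Suc c"] \<open>t < ?n\<close> Suc_add_pred_mod[OF assms(1)] by simp
  ultimately have "?y ! ?P = (if t = ?n - 1 then True else if t = a' then False else x ! ?P)"
    by simp
  then show ?case
    using Suc \<open>t < ?n\<close> assms(2,3,4) Suc_add_pred_mod[OF assms(1)]
    by (auto simp: height_Suc)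
qed simp

lemma height_return_at_matched:
  assumes "matched y ((j + q) mod length y)" "\<not> y ! ((j + q) mod length y)" "q < length y"
    and "2 * count_list y True < length y"
  obtains s m where "s < length y" "0 < m" "m \<le> length y"
    "s + m = Suc q \<or> s + m = Suc q + length y" "height y j (s + m) = height y j s"
proof -
  let ?n = "length y"
  obtain i where i: "i < ?n" "y ! i" "match y i = (j + q) mod ?n"
    using assms(1,2) unfolding matched_def by auto
  obtain m where m: "0 < m" "m \<le> ?n" "height y i m = 0" "match y i = (i + m - 1) mod ?n"
    using match_first_return[OF assms(4) i(1,2)] by metis
  obtain s where s: "s < ?n" "(j + s) mod ?n = i" by (rule offset_mod_surj[OF i(1)])
  have "height y j (s + m) = height y j s" using height_add[of y j s m] s(2) m(3) by simp
  have "(j + (s + (m - 1))) mod ?n = ((j + s) mod ?n + (m - 1)) mod ?n"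
    by (simp add: mod_add_left_eq add.assoc)
  also have "\<dots> = (j + q) mod ?n" using s(2) m(1,4) i(3) by simp
  finally have "(s + (m - 1)) mod ?n = q"
    using mod_add_right_cancel_nat[of "s + (m - 1)" j ?n q] assms(3) by (simp add: add.commute)
  then have "s + m = Suc q \<or> s + m = Suc q + ?n"
    using s(1) m(1,2) by (cases "s + (m - 1) < ?n") (auto simp: le_mod_geq)
  from that[OF s(1) m(1,2) this \<open>height y j (s + m) = height y j s\<close>] show ?thesis .
qed

text \<open>Moving the 1 from a to c lowers the walk between them by 2. The first claim then follows
  from the minimality of the height at a, the second from the drop below the start before a.\<close>
lemma height_after_move_less:
  assumes "c < length x" "\<not> matched x c" "a' < length x - 1" "visible x ((Suc c + a') mod length x)"
    and "t \<le> a'" "height x (Suc c) t < 0"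
  defines "y \<equiv> x[(Suc c + a') mod length x := False, c := True]"
  shows "s \<le> a' \<Longrightarrow> height y (Suc c) (Suc a') < height y (Suc c) s"
    and "a' < s \<Longrightarrow> s < length x \<Longrightarrow> height y (Suc c) (Suc a' + length x) < height y (Suc c) s"
    and "height y (Suc c) (length x) < 0"
proof -
  let ?n = "length x" and ?a = "(Suc c + a') mod length x" and ?Hx = "height x (Suc c)"
  let ?Hy = "height y (Suc c)"
  have "x \<noteq> []" using assms(1) by auto
  have "x ! ?a" using assms(4) by (simp add: visible_def)
  have "\<not> x ! c" using assms(2) by (simp add: matched_def)
  have below: "?Hx ?n < ?Hx s" if "s < ?n" for s
    using height_length_less_after_unmatched[OF assms(1,2) that] .
  have min_at_a: "?Hx a' \<le> ?Hx s" if "s \<le> a'" for s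
    using height_le_at_visible[of a' x "Suc c" s] below assms(3,4) that by simp
  have Hy: "?Hy s = ?Hx s - (if a' < s \<and> s < ?n then 2 else 0)" if "s \<le> ?n" for s
    unfolding y_def using height_move_one[OF assms(1,3) \<open>x ! ?a\<close> \<open>\<not> x ! c\<close> that] .
  have "?Hx (Suc a') = ?Hx a' + 1" using height_Suc[of x "Suc c" a'] \<open>x ! ?a\<close> by simp
  then have Hy_after_a: "?Hy (Suc a') = ?Hx a' - 1" using Hy[of "Suc a'"] assms(3) by simp
  show "?Hy (Suc a') < ?Hy s" if "s \<le> a'"
    using Hy[of s] Hy_after_a min_at_a[OF that] that assms(3) by simp
  show "?Hy (Suc a' + ?n) < ?Hy s" if "a' < s" "s < ?n"
  proof -
    have "?Hy (Suc a' + ?n) = ?Hy (Suc a') + ?Hy ?n"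
      using height_add[of y "Suc c" "Suc a'" ?n] height_length[of y] \<open>x \<noteq> []\<close>
      by (simp add: y_def)
    then show ?thesis
      using Hy[of ?n] Hy[of s] Hy_after_a below[OF that(2)] min_at_a[OF assms(5)] assms(6) that
      by simp
  qed
  show "?Hy ?n < 0" using Hy[of ?n] below[of 0] \<open>x \<noteq> []\<close> by simp
qed

lemma not_matched_after_move:
  assumes "c < length x" "\<not> matched x c" "a' < length x - 1" "visible x ((Suc c + a') mod length x)"
    and "t \<le> a'" "height x (Suc c) t < 0"
  shows "\<not> matched (x[(Suc c + a') mod length x := False, c := True]) ((Suc c + a') mod length x)"
proof
  let ?n = "length x" and ?a = "(Suc c + a') mod length x"
  let ?y = "x[?a := False, c := True]"
  note less = height_after_move_less[OF assms]
  assume "matched ?y ?a"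
  have "?a \<noteq> c"
    using offset_mod_inj[of a' ?n "?n - 1" "Suc c"] Suc_add_pred_mod[OF assms(1)] assms(3) by auto
  moreover have "?a < ?n" using assms(1) by (intro mod_less_divisor) auto
  ultimately have "\<not> ?y ! ?a" by simp
  have "x \<noteq> []" "length ?y = ?n" "a' < ?n" using assms(1,3) by auto
  then have "2 * count_list ?y True < ?n" using less(3) height_length[of ?y "Suc c"] by simp
  then obtain s m where sm: "s < ?n" "0 < m" "m \<le> ?n" "s + m = Suc a' \<or> s + m = Suc a' + ?n"
    "height ?y (Suc c) (s + m) = height ?y (Suc c) s"
    using height_return_at_matched[of ?y "Suc c" a'] \<open>matched ?y ?a\<close> \<open>\<not> ?y ! ?a\<close>
      \<open>length ?y = ?n\<close> \<open>a' < ?n\<close> by auto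
  from sm(4) show False
  proof
    assume "s + m = Suc a'"
    then show False using less(1)[of s] sm(2,5) by simp
  next
    assume "s + m = Suc a' + ?n"
    then show False using less(2)[of s] sm(1,3,5) by simp
  qed
qed

lemma four_cycle_move_one:
  assumes "x \<in> Xnk n k" "y \<in> Xnk n k" "2 * k < n" "y = x[a := False, c := True]"
    and "a < n" "c < n" "d < n" "d \<noteq> c" "x ! a"
    and "\<not> matched x c" "\<not> matched x d" "\<not> matched y a" "matched y d"
  shows "four_cycle n k x (f x) y (f y)"
proof -
  have n: "length x = n" "length y = n" using assms(1,2) by (auto simp: Xnk_def)
  have "\<not> x ! c" "\<not> x ! d" using assms(10,11) by (auto simp: matched_def)
  then have "a \<noteq> c" using assms(9) by auto
  have y: "y ! j \<longleftrightarrow> j = c \<or> j \<noteq> a \<and> x ! j" if "j < n" for j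
    using assms(4,5,6) n(1) that by (auto simp: nth_list_update)
  have fx: "f x ! j \<longleftrightarrow> \<not> x ! j \<and> matched x j" and fy: "f y ! j \<longleftrightarrow> \<not> y ! j \<and> matched y j"
    if "j < n" for j
    using nth_f that n by auto
  have "kneser_adj n k (f x) y"
    using f_in_Xnk[OF assms(1,3)] assms(2,10) fx y unfolding kneser_adj_def by blast
  moreover have "kneser_adj n k (f y) x"
    using f_in_Xnk[OF assms(2,3)] assms(1,12) fy y unfolding kneser_adj_def by blast
  moreover have "x \<noteq> f x" "x \<noteq> y" "x \<noteq> f y"
    using fx[OF assms(5)] fy[OF assms(5)] y[OF assms(5)] assms(9,12) \<open>a \<noteq> c\<close> by auto
  moreover have "f x \<noteq> y" "y \<noteq> f y"
    using fx[OF assms(6)] fy[OF assms(6)] y[OF assms(6)] assms(10) \<open>a \<noteq> c\<close> by auto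
  moreover have "f x \<noteq> f y"
    using fx[OF assms(7)] fy[OF assms(7)] y[OF assms(7)] assms(8,9,11,13) \<open>\<not> x ! d\<close> by auto
  ultimately show ?thesis
    using kneser_adj_f[OF assms(1,3)] kneser_adj_f[OF assms(2,3)] unfolding four_cycle_def by simp
qed

locale connector_layout =
  fixes n i :: nat and x y p u q w r :: "bool list"
  assumes dyck_w: "dyck w"
    and x_eq: "x = sigma i (p @ [True] @ u @ [False] @ q @ [False] @ w @ [False] @ r)"
    and y_eq: "y = sigma i (p @ [False] @ u @ [False] @ q @ [True] @ w @ [False] @ r)"
    and length_x: "length x = n"
begin

abbreviation "zx \<equiv> p @ [True] @ u @ [False] @ q @ [False] @ w @ [False] @ r"
abbreviation "zy \<equiv> p @ [False] @ u @ [False] @ q @ [True] @ w @ [False] @ r"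

abbreviation "pos_a \<equiv> (length p + i) mod n"
abbreviation "pos_c \<equiv> (length p + 2 + length u + length q + i) mod n"
abbreviation "pos_d \<equiv> (length p + 3 + length u + length q + length w + i) mod n"

text \<open>Offset of a from the position right after c: past w, d and r, then around to p.\<close>
abbreviation "off_a \<equiv> length w + 1 + length r + length p"

lemma n_eq: "n = length p + length u + length q + length w + length r + 4"
  using length_x by (simp add: x_eq)

lemma length_zx: "length zx = n"
  using n_eq by simp

lemma length_y: "length y = n"
  using length_x by (simp add: x_eq y_eq)

lemma Suc_pos_c_add_mod:
  "(Suc pos_c + m) mod n = (length p + 3 + length u + length q + i + m) mod n"
proof -
  have "(Suc pos_c + m) mod n = (Suc pos_c mod n + m) mod n" by (rule mod_add_left_eq[symmetric])
  also have "Suc pos_c mod n = Suc (length p + 2 + length u + length q + i) mod n"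
    by (rule mod_Suc_eq)
  also have "(\<dots> + m) mod n = (Suc (length p + 2 + length u + length q + i) + m) mod n"
    by (rule mod_add_left_eq)
  also have "Suc (length p + 2 + length u + length q + i) + m =
      length p + 3 + length u + length q + i + m" by simp
  finally show ?thesis .
qed

lemma pos_a_offset: "pos_a = (Suc pos_c + off_a) mod n"
proof -
  have "length p + 3 + length u + length q + i + off_a = length p + i + n" by (simp add: n_eq)
  then show ?thesis unfolding Suc_pos_c_add_mod by (metis mod_add_self2)
qed

lemma pos_d_offset: "pos_d = (Suc pos_c + length w) mod n"
  unfolding Suc_pos_c_add_mod by (simp add: algebra_simps)

lemma off_a_less: "off_a < n - 1"
  by (simp add: n_eq)

lemma pos_c_less: "pos_c < n"
  using n_eq by simp

lemma pos_d_neq_pos_c: "pos_d \<noteq> pos_c"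
  using offset_mod_inj[of "length w" n "n - 1" "Suc pos_c"] Suc_add_pred_mod[OF pos_c_less]
  unfolding pos_d_offset by (simp add: n_eq)

lemma nth_pos_a: "x ! pos_a"
proof -
  have "zx \<noteq> []" by simp
  moreover have "length p < n" using n_eq by simp
  ultimately show ?thesis
    using sigma_nth[of zx i "length p", unfolded length_zx] by (simp add: x_eq nth_append)
qed

lemma y_eq_update: "y = x[pos_a := False, pos_c := True]"
proof -
  let ?c = "length p + 2 + length u + length q"
  have "?c < n" "length p < n" using n_eq by simp_all
  have "zy = zx[length p := False, ?c := True]" by (simp add: list_update_append)
  then have "y = sigma i (zx[length p := False, ?c := True])" by (simp only: y_eq)
  also have "\<dots> = (sigma i (zx[length p := False]))[(?c + i) mod n := True]"
    using sigma_list_update[of ?c "zx[length p := False]" i True] \<open>?c < n\<close>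
    by (simp only: length_list_update length_zx)
  also have "sigma i (zx[length p := False]) = x[pos_a := False]"
    using sigma_list_update[of "length p" zx i False] \<open>length p < n\<close>
    by (simp only: length_zx x_eq)
  finally show ?thesis .
qed

lemma height_x_before_pos_d: "height x (Suc pos_c) (length w + 1) = -1"
proof -
  let ?pre = "p @ [True] @ u @ [False] @ q @ [False]"
  have zx: "zx = ?pre @ w @ False # r" and pre: "length ?pre = length p + 3 + length u + length q"
    by simp_all
  have "height x (Suc pos_c) (length w + 1) =
      height x (length p + 3 + length u + length q + i) (length w + 1)"
    using height_mod[of x "Suc pos_c"] height_mod[of x "length p + 3 + length u + length q + i"]
      Suc_pos_c_add_mod[of 0] length_x by simp
  also have "\<dots> = height zx (length p + 3 + length u + length q) (length w + 1)"
    unfolding x_eq by (rule height_sigma) simp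
  also have "\<dots> = -1"
    using height_dyck_then_down[OF dyck_w, of ?pre r] by (simp only: zx[symmetric] pre)
  finally show ?thesis .
qed

lemma match_y_pos_c: "match y pos_c = pos_d"
proof -
  let ?c = "length p + 2 + length u + length q" and ?pre = "p @ [False] @ u @ [False] @ q"
  have zy: "zy = ?pre @ True # w @ False # r" and pre: "length ?pre = ?c" by simp_all
  have "height y pos_c m = height y (?c + i) m" for m
    using height_mod[of y "?c + i" m] length_y by simp
  also have "height y (?c + i) m = height zy ?c m" for m
    unfolding y_eq by (rule height_sigma) simp
  finally have hy: "height y pos_c m = height zy ?c m" for m .
  note block =
    height_dyck_block[OF dyck_w, where pre = ?pre and post = r, unfolded zy[symmetric] pre]
  have "height y pos_c m \<noteq> 0" if "0 < m" "m < length w + 2" for m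
    using block(1)[OF that] hy by simp
  moreover have "height y pos_c (length w + 2) = 0" by (rule trans[OF hy block(2)])
  ultimately have "match y pos_c = (pos_c + (length w + 2) - 1) mod length y"
    by (intro match_eqI) simp_all
  also have "pos_c + (length w + 2) - 1 = pos_c + (length w + 1)" by simp
  also have "(pos_c + (length w + 1)) mod length y = (?c + i + (length w + 1)) mod length y"
    unfolding length_y by (rule mod_add_left_eq)
  also have "?c + i + (length w + 1) = length p + 3 + length u + length q + length w + i" by simp
  finally show ?thesis unfolding length_y .
qed

lemma connector_four_cycle:
  assumes "x \<in> Xnk n k" "y \<in> Xnk n k" "2 * k < n"
    and "visible x pos_a" "\<not> matched x pos_c" "\<not> matched x pos_d"
  shows "four_cycle n k x (f x) y (f y)"
proof (rule four_cycle_move_one[OF assms(1-3) y_eq_update])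
  show "pos_a < n" "pos_c < n" "pos_d < n" using n_eq by simp_all
  show "pos_d \<noteq> pos_c" "x ! pos_a" "\<not> matched x pos_c" "\<not> matched x pos_d"
    by (fact pos_d_neq_pos_c nth_pos_a assms(5,6))+
  show "\<not> matched y pos_a"
    using not_matched_after_move[of pos_c x off_a "length w + 1"] assms(4,5) height_x_before_pos_d
      off_a_less pos_c_less
    unfolding y_eq_update pos_a_offset length_x by simp
  have "y ! pos_c" using pos_c_less length_x by (simp add: y_eq_update)
  then show "matched y pos_d"
    using match_y_pos_c pos_c_less length_y unfolding matched_def by blast
qed

end

lemma connector_ord_four_cycle:
  assumes "2 * k < n" "connector_ord n k x y"
  shows "four_cycle n k x (f x) y (f y)"
proof -
  from assms(2) obtain i u w p q r where in_Xnk: "x \<in> Xnk n k" "y \<in> Xnk n k" and "dyck w"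
    and x: "x = sigma i (p @ [True] @ u @ [False] @ q @ [False] @ w @ [False] @ r)"
    and y: "y = sigma i (p @ [False] @ u @ [False] @ q @ [True] @ w @ [False] @ r)"
    and conds: "visible x ((length p + i) mod n)"
      "\<not> matched x ((length p + 2 + length u + length q + i) mod n)"
      "\<not> matched x ((length p + 3 + length u + length q + length w + i) mod n)"
    unfolding connector_ord_def Let_def by blast
  have "length x = n" using in_Xnk by (simp add: Xnk_def)
  then interpret connector_layout n i x y p u q w r
    using \<open>dyck w\<close> x y by unfold_locales
  show ?thesis using connector_four_cycle[OF in_Xnk assms(1) conds] .
qed

lemma kneser_adj_sym: "kneser_adj n k a b \<Longrightarrow> kneser_adj n k b a"
  unfolding kneser_adj_def by blast

lemma four_cycle_swap:
  assumes "four_cycle n k y (f y) x (f x)"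
  shows "four_cycle n k x (f x) y (f y)"
proof -
  have "distinct [x, f x, y, f y]" using assms unfolding four_cycle_def by auto
  then show ?thesis using assms kneser_adj_sym unfolding four_cycle_def by blast
qed

theorem mainTheorem11:
  fixes n k :: nat and x y :: "bool list"
  assumes "k \<ge> 1" and "n \<ge> 2 * k + 1" and "connector n k x y"
  shows "four_cycle n k x (f x) y (f y)"
proof -
  have "2 * k < n" using assms(2) by simp
  from assms(3) consider "connector_ord n k x y" | "connector_ord n k y x"
    unfolding connector_def by blast
  then show ?thesis
  proof cases
    case 1
    then show ?thesis by (rule connector_ord_four_cycle[OF \<open>2 * k < n\<close>])
  next
    case 2
    then show ?thesis by (rule four_cycle_swap[OF connector_ord_four_cycle[OF \<open>2 * k < n\<close>]])
  qed
qed

end
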